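(* Consider Algorithm 3 (described in the context) under the Standing Assumption and Matrix Assumption of the context. There exists a constant $\xi_{\min}>0$, independent of the run, such that in any run of the algorithm there exist $\bar k_\xi\in\mathbb{N}$ and $\bar\xi_{\min}\in[\xi_{\min},\bar\xi_{-1}]$ with $\bar\xi_k=\bar\xi_{\min}$ for all $k\ge\bar k_\xi$.
   Context: Problem: $\min_x f(x)$ s.t. $c(x)=0$, $f(x)=\mathbb{E}[F(x,\omega)]$, $c:\mathbb{R}^n\to\mathbb{R}^m$ deterministic. Notation: $g_k=\nabla f(x_k)$, $c_k=c(x_k)$, $J_k=\nabla c(x_k)^T$; $\Delta q(x,\tau,g,H,d)=-\tau(g^Td+\frac12\max\{d^THd,0\})+\|c(x)\|_1$. Standing Assumption: an open convex set $\mathcal X$ contains all iterates; $f$ is $C^1$, bounded below on $\mathcal X$, $\nabla f$ bounded and $L$-Lipschitz on $\mathcal X$; $c$, $\nabla c^T$ bounded on $\mathcal X$; $\nabla c_i$ is $\gamma_i$-Lipschitz on $\mathcal X$; singular values of $\nabla c(x)^T$ bounded away from zero uniformly over $\mathcal X$; $\Gamma:=\sum_i\gamma_i$. Matrix Assumption: deterministic symmetric $H_k$ with $\|H_k\|_2\le\kappa_H$ and $u^TH_ku\ge\zeta\|u\|_2^2$ whenever $J_ku=0$. Algorithm 3 (inputs $x_0$, $\bar\tau_{-1}>0$, $\epsilon,\sigma\in(0,1)$, $\bar\xi_{-1}>0$, $\{\beta_k\}\subset(0,1]$, $\theta\ge0$): at iteration $k$, obtain stochastic gradient $\bar g_k$;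 $(\bar d_k,\bar y_k)$ solves $H_k\bar d_k+J_k^T\bar y_k=-\bar g_k$, $J_k\bar d_k=-c_k$ (assumed $\bar d_k\neq0$). $\bar\tau_k^{trial}=\infty$ if $\bar g_k^T\bar d_k+\max\{\bar d_k^TH_k\bar d_k,0\}\le0$, else $\frac{(1-\sigma)\|c_k\|_1}{\bar g_k^T\bar d_k+\max\{\bar d_k^TH_k\bar d_k,0\}}$; $\bar\tau_k=\bar\tau_{k-1}$ if $\bar\tau_{k-1}\le\bar\tau_k^{trial}$, else $(1-\epsilon)\bar\tau_k^{trial}$. $\bar\xi_k^{trial}=\frac{\Delta q(x_k,\bar\tau_k,\bar g_k,H_k,\bar d_k)}{\bar\tau_k\|\bar d_k\|_2^2}$; $\bar\xi_k=\bar\xi_{k-1}$ if $\bar\xi_{k-1}\le\bar\xi_k^{trial}$, else $(1-\epsilon)\bar\xi_k^{trial}$. With $D_k=(\bar\tau_kL+\Gamma)\|\bar d_k\|_2^2$, $\hat a_k=\beta_k\Delta q(x_k,\bar\tau_k,\bar g_k,H_k,\bar d_k)/D_k$, $\tilde a_k=\hat a_k-4\|c_k\|_1/D_k$, project both onto $[a_k,a_k+\theta\beta_k^2]$ with $a_k=\frac{\beta_k\bar\xi_k\bar\tau_k}{\bar\tau_kL+\Gamma}$ to get $\widehat\alpha_k,\widetilde\alpha_k$; $\bar\alpha_k=\widehat\alpha_k$ if $\widehat\alpha_k<1$, $1$ if $\widetilde\alpha_k\le1\le\widehat\alpha_k$, $\widetilde\alpha_k$ if $\widetilde\alpha_k>1$;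 $x_{k+1}=x_k+\bar\alpha_k\bar d_k$. *)

theory Defs
  imports "HOL-Analysis.Analysis"
begin

text \<open>Vectors in R^n are real^'n, constraint values in R^m are real^'m.
  The constraint Jacobian J(x) = nabla c(x)^T is an m x n matrix of type real^'n^'m
  (row i is nabla c_i(x)^T).\<close>

definition l1norm :: "real^'m \<Rightarrow> real" where
  "l1norm v = (\<Sum>i\<in>UNIV. \<bar>v $ i\<bar>)"

definition dq :: "(real^'n \<Rightarrow> real^'m) \<Rightarrow> real^'n \<Rightarrow> real \<Rightarrow> real^'n \<Rightarrow> real^'n^'n \<Rightarrow> real^'n \<Rightarrow> real" where
  "dq c x \<tau> g H d = - \<tau> * (g \<bullet> d + 1/2 * max (d \<bullet> (H *v d)) 0) + l1norm (c x)"

definition proj_int :: "real \<Rightarrow> real \<Rightarrow> real \<Rightarrow> real" where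
  "proj_int lo hi a = max lo (min a hi)"

text \<open>One run of Algorithm 3.  The sequences are: iterates x, stochastic gradients gb,
  matrices H, search directions d, multipliers y, merit parameters tau (tau k = bar tau_k),
  ratio parameters xi (xi k = bar xi_k) and step sizes alpha.  The values bar tau_{-1},
  bar xi_{-1} are the inputs tau_init, xi_init.\<close>
definition alg3_run ::
  "(real^'n \<Rightarrow> real^'m) \<Rightarrow> (real^'n \<Rightarrow> real^'n^'m) \<Rightarrow> real \<Rightarrow> real \<Rightarrow>
   real \<Rightarrow> real \<Rightarrow> real \<Rightarrow> real \<Rightarrow> (nat \<Rightarrow> real) \<Rightarrow> real \<Rightarrow>
   (nat \<Rightarrow> real^'n) \<Rightarrow> (nat \<Rightarrow> real^'n) \<Rightarrow> (nat \<Rightarrow> real^'n^'n) \<Rightarrow> (nat \<Rightarrow> real^'n) \<Rightarrow>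
   (nat \<Rightarrow> real^'m) \<Rightarrow> (nat \<Rightarrow> real) \<Rightarrow> (nat \<Rightarrow> real) \<Rightarrow> (nat \<Rightarrow> real) \<Rightarrow> bool" where
  "alg3_run c J L \<Gamma> tau_init xi_init \<epsilon> \<sigma> \<beta> \<theta> x gb H d y tau xi alpha \<longleftrightarrow>
    (\<forall>k.
      H k *v d k + transpose (J (x k)) *v y k = - gb k \<and>
      J (x k) *v d k = - c (x k) \<and>
      d k \<noteq> 0 \<and>
      (let tprev = (if k = 0 then tau_init else tau (k - 1));
           den = gb k \<bullet> d k + max (d k \<bullet> (H k *v d k)) 0
       in tau k = (if den \<le> 0 then tprev
                   else (let ttrial = (1 - \<sigma>) * l1norm (c (x k)) / den
                         in if tprev \<le> ttrial then tprev else (1 - \<epsilon>) * ttrial))) \<and>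
      (let xprev = (if k = 0 then xi_init else xi (k - 1));
           xtrial = dq c (x k) (tau k) (gb k) (H k) (d k) / (tau k * (norm (d k))\<^sup>2)
       in xi k = (if xprev \<le> xtrial then xprev else (1 - \<epsilon>) * xtrial)) \<and>
      (let D = (tau k * L + \<Gamma>) * (norm (d k))\<^sup>2;
           ahat = \<beta> k * dq c (x k) (tau k) (gb k) (H k) (d k) / D;
           atil = ahat - 4 * l1norm (c (x k)) / D;
           a = \<beta> k * xi k * tau k / (tau k * L + \<Gamma>);
           hal = proj_int a (a + \<theta> * (\<beta> k)\<^sup>2) ahat;
           tal = proj_int a (a + \<theta> * (\<beta> k)\<^sup>2) atil
       in alpha k = (if hal < 1 then hal else if tal \<le> 1 then 1 else tal)) \<and>
      x (Suc k) = x k + alpha k *\<^sub>R d k)"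

end

theory Submission
  imports Defs
begin

text \<open>Whenever the merit parameter rule is active it enforces
  \<open>\<tau>\<^sub>k (g\<^sub>k\<^sup>T d\<^sub>k + max{d\<^sub>k\<^sup>T H\<^sub>k d\<^sub>k, 0}) \<le> (1 - \<sigma>) \<parallel>c\<^sub>k\<parallel>\<^sub>1\<close>, so the model reduction
  is at least \<open>\<tau>\<^sub>k/2 max{d\<^sub>k\<^sup>T H\<^sub>k d\<^sub>k, 0} + \<sigma> \<parallel>c\<^sub>k\<parallel>\<^sub>1\<close>. Writing \<open>d\<^sub>k = u + v\<close> with \<open>J\<^sub>k u = 0\<close>
  and \<open>\<kappa> \<parallel>v\<parallel> \<le> \<parallel>c\<^sub>k\<parallel>\<close>, the curvature of \<open>H\<^sub>k\<close> on the null space of \<open>J\<^sub>k\<close> pays for \<open>\<parallel>u\<parallel>\<^sup>2\<close>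
  and the infeasibility term pays for \<open>\<tau>\<^sub>k \<parallel>v\<parallel>\<^sup>2\<close> (as \<tau> never increases and \<open>\<parallel>c\<^sub>k\<parallel>\<close> is bounded).
  Hence the trial value of \<open>\<xi>\<^sub>k\<close> is bounded below by a constant depending only on the
  problem data, so \<open>\<xi>\<^sub>k\<close>, which never increases and drops by a factor \<open>1 - \<epsilon>\<close> whenever it
  changes, stays above a positive constant and changes only finitely often.\<close>

lemma norm_le_l1norm: "norm v \<le> l1norm v"
  unfolding l1norm_def by (rule norm_le_l1_cart)

lemma l1norm_nonneg: "0 \<le> l1norm v"
  using norm_le_l1norm[of v] norm_ge_zero order_trans by blast

lemma norm_matrix_vector_le:
  fixes H :: "real^'n^'m"
  assumes "onorm (\<lambda>v. H *v v) \<le> K"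
  shows "norm (H *v v) \<le> K * norm v"
  using onorm[OF matrix_vector_mul_bounded_linear[of H], of v] assms
  by (meson mult_right_mono norm_ge_zero order_trans)

lemma abs_inner_matrix_vector_le:
  fixes H :: "real^'n^'m"
  assumes "onorm (\<lambda>v. H *v v) \<le> K"
  shows "\<bar>u \<bullet> (H *v v)\<bar> \<le> K * norm u * norm v"
proof -
  have "\<bar>u \<bullet> (H *v v)\<bar> \<le> norm u * norm (H *v v)"
    by (rule Cauchy_Schwarz_ineq2)
  also have "\<dots> \<le> norm u * (K * norm v)"
    using norm_matrix_vector_le[OF assms] by (simp add: mult_left_mono)
  finally show ?thesis by (simp add: mult.assoc mult.left_commute)
qed

text \<open>Take \<open>v = J\<^sup>T w\<close> with \<open>J J\<^sup>T w = b\<close>; then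
  \<open>\<parallel>v\<parallel>\<^sup>2 = w \<bullet> b \<le> \<parallel>w\<parallel> \<parallel>b\<parallel> \<le> \<parallel>v\<parallel> \<parallel>b\<parallel> / \<kappa>\<close>.\<close>
lemma exists_preimage_norm_le:
  fixes J :: "real^'n^'m"
  assumes "0 < \<kappa>" and sv: "\<And>w. \<kappa> * norm w \<le> norm (transpose J *v w)"
  shows "\<exists>v. J *v v = b \<and> \<kappa> * norm v \<le> norm b"
proof -
  define G where "G = (\<lambda>w. (J ** transpose J) *v w)"
  have G_eq: "G w = J *v (transpose J *v w)" for w
    unfolding G_def by (metis matrix_vector_mul_assoc)
  have G_inner: "w \<bullet> G w = (norm (transpose J *v w))\<^sup>2" for w
    unfolding G_eq power2_norm_eq_inner transpose_matrix_vector
    by (simp add: dot_lmul_matrix)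
  have "linear G"
    unfolding G_def by simp
  moreover have "inj G"
  proof (rule linear_injective_0[OF \<open>linear G\<close>, THEN iffD2], intro allI impI)
    fix w assume "G w = 0"
    then have "\<kappa> * norm w \<le> 0" using sv[of w] G_inner[of w] by simp
    then show "w = 0" using \<open>0 < \<kappa>\<close> by (simp add: mult_le_0_iff)
  qed
  ultimately obtain w where "G w = b"
    by (metis linear_injective_imp_surjective surjD)
  define v where "v = transpose J *v w"
  have "(norm v)\<^sup>2 = w \<bullet> b"
    using G_inner[of w] \<open>G w = b\<close> by (simp add: v_def)
  also have "\<dots> \<le> norm w * norm b"
    by (rule norm_cauchy_schwarz)
  finally have "\<kappa> * (norm v)\<^sup>2 \<le> (\<kappa> * norm w) * norm b"
    using \<open>0 < \<kappa>\<close> by (simp add: mult.assoc)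
  also have "\<dots> \<le> norm v * norm b"
    using sv[of w] by (simp add: v_def mult_right_mono)
  finally have "\<kappa> * norm v \<le> norm b"
    by (cases "v = 0") (auto simp: power2_eq_square)
  moreover have "J *v v = b"
    using \<open>G w = b\<close> by (simp add: G_eq v_def)
  ultimately show ?thesis by blast
qed

lemma quadratic_form_null_space_lower_bound:
  fixes H :: "real^'n^'n" and J :: "real^'n^'m"
  assumes "onorm (\<lambda>v. H *v v) \<le> K"
    and "\<And>u. J *v u = 0 \<Longrightarrow> \<zeta> * (norm u)\<^sup>2 \<le> u \<bullet> (H *v u)" and "J *v u = 0"
  shows "\<zeta> * (norm u)\<^sup>2 - 2 * K * norm u * norm v - K * (norm v)\<^sup>2 \<le> (u + v) \<bullet> (H *v (u + v))"
proof -
  have "(u + v) \<bullet> (H *v (u + v)) = u \<bullet> (H *v u) + u \<bullet> (H *v v) + v \<bullet> (H *v u) + v \<bullet> (H *v v)"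
    by (simp add: matrix_vector_right_distrib inner_add_left inner_add_right)
  moreover have "\<bar>u \<bullet> (H *v v)\<bar> \<le> K * norm u * norm v"
    and "\<bar>v \<bullet> (H *v u)\<bar> \<le> K * norm u * norm v"
    and "\<bar>v \<bullet> (H *v v)\<bar> \<le> K * (norm v)\<^sup>2"
    using abs_inner_matrix_vector_le[OF assms(1), of u v] abs_inner_matrix_vector_le[OF assms(1), of v u]
      abs_inner_matrix_vector_le[OF assms(1), of v v]
    by (simp_all add: power2_eq_square mult.commute mult.left_commute)
  ultimately show ?thesis
    using assms(2)[OF assms(3)] by linarith
qed

definition ratio_bound :: "real \<Rightarrow> real \<Rightarrow> real \<Rightarrow> real" where
  "ratio_bound \<zeta> K A = min (\<zeta> / 4) (A / ((max 1 (6 * K / \<zeta>))\<^sup>2 + 1)) / 2"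

lemma ratio_bound_pos:
  assumes "0 < \<zeta>" and "0 < A"
  shows "0 < ratio_bound \<zeta> K A"
  using assms unfolding ratio_bound_def by (simp add: add_nonneg_pos)

text \<open>With \<open>M = max 1 (6 K / \<zeta>)\<close>: if \<open>a \<ge> M r\<close>, the term \<open>\<zeta> a\<^sup>2\<close> absorbs the
  cross terms and \<open>Q \<ge> \<zeta> a\<^sup>2 / 2\<close>; otherwise \<open>a\<^sup>2 + r\<^sup>2 \<le> (M\<^sup>2 + 1) r\<^sup>2\<close> is paid
  for by \<open>A r\<^sup>2\<close>.\<close>
lemma quadratic_split_bound:
  fixes \<zeta> K A a r n Q :: real
  assumes "0 < \<zeta>" "0 \<le> K" "0 < A" "0 \<le> a" "0 \<le> r" "0 \<le> n"
    and "n \<le> a + r" and Q: "\<zeta> * a\<^sup>2 - 2 * K * a * r - K * r\<^sup>2 \<le> Q"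
  shows "ratio_bound \<zeta> K A * n\<^sup>2 \<le> max Q 0 / 2 + A * r\<^sup>2"
proof -
  define M where "M = max 1 (6 * K / \<zeta>)"
  define \<xi> where "\<xi> = min (\<zeta> / 4) (A / (M\<^sup>2 + 1))"
  have "1 \<le> M" and "6 * K / \<zeta> \<le> M"
    unfolding M_def by auto
  then have "K \<le> \<zeta> * M / 6"
    using \<open>0 < \<zeta>\<close> by (simp add: field_simps)
  have "\<xi> \<le> \<zeta> / 4" and "\<xi> \<le> A / (M\<^sup>2 + 1)"
    unfolding \<xi>_def by (simp_all only: min.cobounded1 min.cobounded2)
  have "0 < M\<^sup>2 + 1"
    by (simp add: add_nonneg_pos)
  then have "0 < \<xi>"
    using assms unfolding \<xi>_def by simp
  have split: "\<xi> * (a\<^sup>2 + r\<^sup>2) \<le> max Q 0 / 2 + A * r\<^sup>2"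
  proof (cases "M * r \<le> a")
    case True
    have "2 * K * a * r \<le> 2 * (\<zeta> * M / 6) * a * r"
      using mult_right_mono[OF \<open>K \<le> \<zeta> * M / 6\<close>, of "2 * a * r"] assms
      by (simp add: algebra_simps)
    also have "\<dots> = \<zeta> / 3 * (a * (M * r))"
      by simp
    also have "\<dots> \<le> \<zeta> / 3 * (a * a)"
      using True assms by (intro mult_left_mono) auto
    finally have cross: "2 * K * a * r \<le> \<zeta> / 3 * a\<^sup>2"
      by (simp add: power2_eq_square)
    have "K * r\<^sup>2 \<le> (\<zeta> * M / 6) * (M * r\<^sup>2)"
      using \<open>K \<le> \<zeta> * M / 6\<close> \<open>1 \<le> M\<close> assms
      using mult_right_mono[OF \<open>1 \<le> M\<close>, of "r\<^sup>2"] by (intro mult_mono) auto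
    also have "\<dots> = \<zeta> / 6 * (M * r)\<^sup>2"
      by (simp add: power2_eq_square)
    also have "\<dots> \<le> \<zeta> / 6 * a\<^sup>2"
      using True assms \<open>1 \<le> M\<close> by (intro mult_left_mono power_mono) auto
    finally have "\<zeta> / 4 * a\<^sup>2 \<le> max Q 0 / 2"
      using Q cross by linarith
    moreover have "\<xi> * a\<^sup>2 \<le> \<zeta> / 4 * a\<^sup>2"
      using mult_right_mono[OF \<open>\<xi> \<le> \<zeta> / 4\<close>, of "a\<^sup>2"] by simp
    moreover have "\<xi> * r\<^sup>2 \<le> A * r\<^sup>2"
    proof -
      have "A / (M\<^sup>2 + 1) \<le> A"
        using divide_left_mono[of 1 "M\<^sup>2 + 1" A] \<open>0 < M\<^sup>2 + 1\<close> assms by simp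
      then show ?thesis
        using mult_right_mono[of \<xi> A "r\<^sup>2"] \<open>\<xi> \<le> A / (M\<^sup>2 + 1)\<close> by simp
    qed
    ultimately show ?thesis by (simp add: algebra_simps)
  next
    case False
    then have "a\<^sup>2 \<le> M\<^sup>2 * r\<^sup>2"
      using assms by (metis power_mono power_mult_distrib nle_le)
    then have "\<xi> * (a\<^sup>2 + r\<^sup>2) \<le> A / (M\<^sup>2 + 1) * ((M\<^sup>2 + 1) * r\<^sup>2)"
      using \<open>0 < \<xi>\<close> \<open>\<xi> \<le> A / (M\<^sup>2 + 1)\<close> by (intro mult_mono) (auto simp: algebra_simps)
    also have "\<dots> = A * r\<^sup>2"
      using \<open>0 < M\<^sup>2 + 1\<close> by simp
    finally show ?thesis by simp
  qed
  have "n\<^sup>2 \<le> (a + r)\<^sup>2"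
    using assms by (simp add: power_mono)
  also have "\<dots> \<le> 2 * (a\<^sup>2 + r\<^sup>2)"
    using sum_squares_ge_zero[of "a - r" 0] by (simp add: power2_eq_square algebra_simps)
  finally have "\<xi> / 2 * n\<^sup>2 \<le> \<xi> * (a\<^sup>2 + r\<^sup>2)"
    using \<open>0 < \<xi>\<close> by (simp add: mult_left_mono)
  with split show ?thesis
    unfolding ratio_bound_def M_def[symmetric] \<xi>_def[symmetric] by linarith
qed

lemma l1norm_pos_if_denominator_pos:
  fixes H :: "real^'n^'n" and J :: "real^'n^'m"
  assumes "H *v d + transpose J *v y = - g" and "J *v d = - b"
    and "\<And>u. J *v u = 0 \<Longrightarrow> \<zeta> * (norm u)\<^sup>2 \<le> u \<bullet> (H *v u)" and "0 < \<zeta>"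
    and "0 < g \<bullet> d + max (d \<bullet> (H *v d)) 0"
  shows "0 < l1norm b"
proof (rule ccontr)
  assume "\<not> 0 < l1norm b"
  then have "b = 0"
    using norm_le_l1norm[of b] by (metis norm_le_zero_iff order_trans not_less)
  then have "\<zeta> * (norm d)\<^sup>2 \<le> d \<bullet> (H *v d)"
    using assms(2,3) by simp
  then have "0 \<le> d \<bullet> (H *v d)"
    using \<open>0 < \<zeta>\<close> by (metis less_imp_le mult_nonneg_nonneg order_trans zero_le_power2)
  moreover have "g = - (H *v d + transpose J *v y)"
    using assms(1) by (metis minus_minus)
  then have "g \<bullet> d = - ((H *v d) \<bullet> d) - (transpose J *v y) \<bullet> d"
    by (simp add: inner_add_left inner_diff_left)
  then have "g \<bullet> d = - (d \<bullet> (H *v d)) - y \<bullet> (J *v d)"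
    by (metis inner_commute dot_lmul_matrix transpose_matrix_vector)
  ultimately show False
    using assms(2,5) \<open>b = 0\<close> by simp
qed

lemma dq_lower_bound:
  assumes "0 < \<tau>" and "\<sigma> \<le> 1"
    and "0 < g \<bullet> d + max (d \<bullet> (H *v d)) 0 \<Longrightarrow>
           \<tau> * (g \<bullet> d + max (d \<bullet> (H *v d)) 0) \<le> (1 - \<sigma>) * l1norm (c x)"
  shows "\<tau> / 2 * max (d \<bullet> (H *v d)) 0 + \<sigma> * l1norm (c x) \<le> dq c x \<tau> g H d"
proof -
  define den where "den = g \<bullet> d + max (d \<bullet> (H *v d)) 0"
  have dq_eq: "dq c x \<tau> g H d = \<tau> / 2 * max (d \<bullet> (H *v d)) 0 + l1norm (c x) - \<tau> * den"
    unfolding dq_def den_def by (simp add: algebra_simps)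
  have "\<sigma> * l1norm (c x) \<le> l1norm (c x)"
    using mult_right_mono[OF \<open>\<sigma> \<le> 1\<close> l1norm_nonneg] by simp
  moreover have "\<tau> * den \<le> 0 \<or> \<tau> * den \<le> (1 - \<sigma>) * l1norm (c x)"
    using assms unfolding den_def[symmetric] by (cases "0 < den") (auto simp: mult_le_0_iff)
  ultimately show ?thesis
    unfolding dq_eq by (auto simp: algebra_simps)
qed

lemma ratio_bound_le_ratio_trial:
  fixes H :: "real^'n^'n" and J :: "real^'n^'m" and c :: "real^'n \<Rightarrow> real^'m"
  assumes "J *v d = - c x" and "d \<noteq> 0"
    and "0 < \<kappa>" and "\<And>w. \<kappa> * norm w \<le> norm (transpose J *v w)"
    and "onorm (\<lambda>v. H *v v) \<le> K" and "0 \<le> K"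
    and "\<And>u. J *v u = 0 \<Longrightarrow> \<zeta> * (norm u)\<^sup>2 \<le> u \<bullet> (H *v u)" and "0 < \<zeta>"
    and "norm (c x) \<le> B" and "0 < B" and "0 < \<tau>" and "\<tau> \<le> \<tau>0" and "0 < \<sigma>" and "\<sigma> \<le> 1"
    and "0 < g \<bullet> d + max (d \<bullet> (H *v d)) 0 \<Longrightarrow>
           \<tau> * (g \<bullet> d + max (d \<bullet> (H *v d)) 0) \<le> (1 - \<sigma>) * l1norm (c x)"
  shows "ratio_bound \<zeta> K (\<sigma> * \<kappa>\<^sup>2 / (\<tau>0 * B)) \<le> dq c x \<tau> g H d / (\<tau> * (norm d)\<^sup>2)"
proof -
  define A where "A = \<sigma> * \<kappa>\<^sup>2 / (\<tau>0 * B)"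
  obtain v where Jv: "J *v v = - c x" and v_le: "\<kappa> * norm v \<le> norm (c x)"
    using exists_preimage_norm_le[OF assms(3,4), of "- c x"] by auto
  have "J *v (d - v) = 0"
    using Jv assms(1) by (simp add: matrix_vector_mult_diff_distrib)
  from quadratic_form_null_space_lower_bound[OF assms(5,7) this, of v]
  have "\<zeta> * (norm (d - v))\<^sup>2 - 2 * K * norm (d - v) * norm v - K * (norm v)\<^sup>2 \<le> d \<bullet> (H *v d)"
    by simp
  moreover have "norm d \<le> norm (d - v) + norm v"
    using norm_triangle_sub[of d v] by simp
  moreover have "0 < \<tau>0"
    using \<open>0 < \<tau>\<close> \<open>\<tau> \<le> \<tau>0\<close> by linarith
  moreover from this have "0 < A"
    using \<open>0 < \<sigma>\<close> \<open>0 < \<kappa>\<close> \<open>0 < B\<close> unfolding A_def by simp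
  ultimately have split: "ratio_bound \<zeta> K A * (norm d)\<^sup>2 \<le> max (d \<bullet> (H *v d)) 0 / 2 + A * (norm v)\<^sup>2"
    using \<open>0 < \<zeta>\<close> \<open>0 \<le> K\<close> by (intro quadratic_split_bound) simp_all
  have "\<tau> * (A * (norm v)\<^sup>2) = \<sigma> * ((\<tau> / \<tau>0) * (\<kappa> * norm v / B)) * (\<kappa> * norm v)"
    unfolding A_def using \<open>0 < \<tau>0\<close> \<open>0 < B\<close> by (simp add: field_simps power2_eq_square)
  also have "\<dots> \<le> \<sigma> * 1 * (\<kappa> * norm v)"
    using \<open>0 < \<tau>\<close> \<open>\<tau> \<le> \<tau>0\<close> \<open>0 < \<sigma>\<close> \<open>0 < \<kappa>\<close> \<open>0 < B\<close> v_le \<open>norm (c x) \<le> B\<close>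
    by (intro mult_right_mono mult_left_mono mult_le_one) simp_all
  also have "\<dots> \<le> \<sigma> * l1norm (c x)"
    using v_le norm_le_l1norm[of "c x"] \<open>0 < \<sigma>\<close> by simp
  finally have normal: "\<tau> * (A * (norm v)\<^sup>2) \<le> \<sigma> * l1norm (c x)" .
  have "ratio_bound \<zeta> K A * (\<tau> * (norm d)\<^sup>2) = \<tau> * (ratio_bound \<zeta> K A * (norm d)\<^sup>2)"
    by simp
  also have "\<dots> \<le> \<tau> * (max (d \<bullet> (H *v d)) 0 / 2 + A * (norm v)\<^sup>2)"
    using split \<open>0 < \<tau>\<close> by (simp add: mult_left_mono)
  also have "\<dots> \<le> \<tau> / 2 * max (d \<bullet> (H *v d)) 0 + \<sigma> * l1norm (c x)"
    using normal by (simp add: algebra_simps)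
  also have "\<dots> \<le> dq c x \<tau> g H d"
    using assms(11,14,15) by (rule dq_lower_bound)
  finally show ?thesis
    using \<open>0 < \<tau>\<close> \<open>d \<noteq> 0\<close> unfolding A_def by (simp add: pos_le_divide_eq)
qed

definition merit_update :: "real \<Rightarrow> real \<Rightarrow> real \<Rightarrow> real \<Rightarrow> real \<Rightarrow> real" where
  "merit_update \<epsilon> \<sigma> l den \<tau>prev =
     (if den \<le> 0 then \<tau>prev
      else if \<tau>prev \<le> (1 - \<sigma>) * l / den then \<tau>prev
      else (1 - \<epsilon>) * ((1 - \<sigma>) * l / den))"

definition ratio_update :: "real \<Rightarrow> real \<Rightarrow> real \<Rightarrow> real" where
  "ratio_update \<epsilon> \<xi>trial \<xi>prev = (if \<xi>prev \<le> \<xi>trial then \<xi>prev else (1 - \<epsilon>) * \<xi>trial)"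

lemma alg3_runD:
  assumes "alg3_run c J L \<Gamma> tau_init xi_init \<epsilon> \<sigma> \<beta> \<theta> x gb H d y tau xi alpha"
  shows "H k *v d k + transpose (J (x k)) *v y k = - gb k"
    and "J (x k) *v d k = - c (x k)"
    and "d k \<noteq> 0"
    and "tau k = merit_update \<epsilon> \<sigma> (l1norm (c (x k))) (gb k \<bullet> d k + max (d k \<bullet> (H k *v d k)) 0)
                   (if k = 0 then tau_init else tau (k - 1))"
    and "xi k = ratio_update \<epsilon> (dq c (x k) (tau k) (gb k) (H k) (d k) / (tau k * (norm (d k))\<^sup>2))
                  (if k = 0 then xi_init else xi (k - 1))"
  using assms unfolding alg3_run_def merit_update_def ratio_update_def Let_def by meson+

lemma merit_update_bounds:
  assumes "0 < \<tau>prev" and "0 \<le> l" and "0 < den \<longrightarrow> 0 < l"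
    and "0 < \<epsilon>" "\<epsilon> < 1" and "\<sigma> < 1"
  shows "0 < merit_update \<epsilon> \<sigma> l den \<tau>prev \<and> merit_update \<epsilon> \<sigma> l den \<tau>prev \<le> \<tau>prev \<and>
         (0 < den \<longrightarrow> merit_update \<epsilon> \<sigma> l den \<tau>prev * den \<le> (1 - \<sigma>) * l)"
proof (cases "den \<le> 0")
  case False
  define \<tau>trial where "\<tau>trial = (1 - \<sigma>) * l / den"
  have "0 < \<tau>trial" and trial_den: "\<tau>trial * den = (1 - \<sigma>) * l"
    using False assms unfolding \<tau>trial_def by auto
  show ?thesis
  proof (cases "\<tau>prev \<le> \<tau>trial")
    case True
    then have "\<tau>prev * den \<le> \<tau>trial * den"
      using False by (simp add: mult_right_mono)
    then show ?thesis
      using True False trial_den assms unfolding merit_update_def \<tau>trial_def[symmetric] by simp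
  next
    case not_le: False
    have update: "merit_update \<epsilon> \<sigma> l den \<tau>prev = (1 - \<epsilon>) * \<tau>trial"
      using not_le False unfolding merit_update_def \<tau>trial_def by simp
    have "0 < (1 - \<epsilon>) * \<tau>trial" and "(1 - \<epsilon>) * \<tau>trial \<le> \<tau>trial"
      using \<open>0 < \<tau>trial\<close> assms by (simp_all add: mult_left_le_one_le)
    moreover from this(2) have "(1 - \<epsilon>) * \<tau>trial * den \<le> \<tau>trial * den"
      using False by (simp add: mult_right_mono)
    ultimately show ?thesis
      unfolding update using not_le trial_den by (intro conjI impI) linarith+
  qed
qed (use assms in \<open>simp add: merit_update_def\<close>)

lemma merit_update_sequence:
  fixes \<tau> :: "nat \<Rightarrow> real"
  assumes "0 < \<tau>0" and "\<And>k. 0 \<le> l k" and "\<And>k. 0 < den k \<Longrightarrow> 0 < l k"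
    and "0 < \<epsilon>" "\<epsilon> < 1" and "\<sigma> < 1"
    and \<tau>_def: "\<And>k. \<tau> k = merit_update \<epsilon> \<sigma> (l k) (den k) (if k = 0 then \<tau>0 else \<tau> (k - 1))"
  shows "0 < \<tau> k \<and> \<tau> k \<le> \<tau>0 \<and> (0 < den k \<longrightarrow> \<tau> k * den k \<le> (1 - \<sigma>) * l k)"
proof -
  have step: "0 < \<tau>prev \<Longrightarrow> 0 < merit_update \<epsilon> \<sigma> (l k) (den k) \<tau>prev \<and>
      merit_update \<epsilon> \<sigma> (l k) (den k) \<tau>prev \<le> \<tau>prev \<and>
      (0 < den k \<longrightarrow> merit_update \<epsilon> \<sigma> (l k) (den k) \<tau>prev * den k \<le> (1 - \<sigma>) * l k)"
    for k \<tau>prev using assms by (intro merit_update_bounds) auto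
  have bounded: "0 < \<tau> k \<and> \<tau> k \<le> \<tau>0" for k
  proof (induction k)
    case 0
    show ?case using step[where k=0 and \<tau>prev=\<tau>0] \<tau>_def[of 0] \<open>0 < \<tau>0\<close> by simp
  next
    case (Suc k)
    then show ?case using step[where k="Suc k" and \<tau>prev="\<tau> k"] \<tau>_def[of "Suc k"] by auto
  qed
  have "0 < (if k = 0 then \<tau>0 else \<tau> (k - 1))"
    using bounded \<open>0 < \<tau>0\<close> by simp
  from step[OF this, where k=k] show ?thesis
    unfolding \<tau>_def[of k, symmetric] using bounded[of k] by blast
qed

lemma ratio_update_bounds:
  assumes "0 < \<epsilon>" "\<epsilon> < 1" and "0 < m" and "m \<le> \<xi>trial"
  shows "ratio_update \<epsilon> \<xi>trial \<xi>prev \<le> \<xi>prev \<and>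
         min \<xi>prev ((1 - \<epsilon>) * m) \<le> ratio_update \<epsilon> \<xi>trial \<xi>prev \<and>
         (ratio_update \<epsilon> \<xi>trial \<xi>prev \<noteq> \<xi>prev \<longrightarrow> ratio_update \<epsilon> \<xi>trial \<xi>prev \<le> (1 - \<epsilon>) * \<xi>prev)"
proof (cases "\<xi>prev \<le> \<xi>trial")
  case False
  have update: "ratio_update \<epsilon> \<xi>trial \<xi>prev = (1 - \<epsilon>) * \<xi>trial"
    using False unfolding ratio_update_def by simp
  have "(1 - \<epsilon>) * \<xi>trial \<le> \<xi>trial" and "(1 - \<epsilon>) * m \<le> (1 - \<epsilon>) * \<xi>trial"
    and "(1 - \<epsilon>) * \<xi>trial \<le> (1 - \<epsilon>) * \<xi>prev"
    using assms False by (simp_all add: mult_left_le_one_le mult_left_mono)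
  then show ?thesis
    unfolding update using False by (intro conjI impI) linarith+
qed (simp add: ratio_update_def)

lemma eventually_constant_if_jumps_geometric:
  fixes s :: "nat \<Rightarrow> real"
  assumes "decseq s" and "\<And>k. m \<le> s k" and "0 < m" and "0 < \<epsilon>"
    and jump: "\<And>k. s (Suc k) \<noteq> s k \<Longrightarrow> s (Suc k) \<le> (1 - \<epsilon>) * s k"
  shows "\<exists>N. \<forall>k\<ge>N. s k = s N"
proof -
  obtain l where lim: "s \<longlonglongrightarrow> l" and l_le: "\<And>k. l \<le> s k"
    using decseq_convergent[OF \<open>decseq s\<close>] assms(2) by metis
  have "0 < l"
    using LIMSEQ_le_const[OF lim] assms(2,3) by (meson order_less_le_trans)
  then have "(1 - \<epsilon>) * l < l"
    using \<open>0 < \<epsilon>\<close> by simp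
  \<comment> \<open>once \<open>s k\<close> is closer to its limit than a factor \<open>1 - \<epsilon>\<close>, a further jump would undershoot the limit\<close>
  then have "eventually (\<lambda>k. (1 - \<epsilon>) * s k < l) sequentially"
    by (rule order_tendstoD(2)[OF tendsto_mult_left[OF lim]])
  then obtain N where N: "\<And>k. N \<le> k \<Longrightarrow> (1 - \<epsilon>) * s k < l"
    by (auto simp: eventually_sequentially)
  have stays: "s (Suc k) = s k" if "N \<le> k" for k
    using jump[of k] N[OF that] l_le[of "Suc k"] by linarith
  have "s k = s N" if "N \<le> k" for k
    using that by (induction k rule: dec_induct) (auto simp: stays)
  then show ?thesis by blast
qed

lemma ratio_update_sequence_eventually_const:
  fixes \<xi> :: "nat \<Rightarrow> real"
  assumes "0 < \<epsilon>" "\<epsilon> < 1" and "0 < m" and "0 < \<xi>0" and "\<And>k. m \<le> \<xi>trial k"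
    and \<xi>_def: "\<And>k. \<xi> k = ratio_update \<epsilon> (\<xi>trial k) (if k = 0 then \<xi>0 else \<xi> (k - 1))"
  shows "\<exists>kbar \<xi>bar. min \<xi>0 ((1 - \<epsilon>) * m) \<le> \<xi>bar \<and> \<xi>bar \<le> \<xi>0 \<and> (\<forall>k\<ge>kbar. \<xi> k = \<xi>bar)"
proof -
  have step: "\<xi> k \<le> \<xi>prev \<and> min \<xi>prev ((1 - \<epsilon>) * m) \<le> \<xi> k \<and>
      (\<xi> k \<noteq> \<xi>prev \<longrightarrow> \<xi> k \<le> (1 - \<epsilon>) * \<xi>prev)"
    if "\<xi>prev = (if k = 0 then \<xi>0 else \<xi> (k - 1))" for k \<xi>prev
    unfolding \<xi>_def[of k] that[symmetric] by (rule ratio_update_bounds[OF assms(1-3) assms(5)])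
  have bounded: "min \<xi>0 ((1 - \<epsilon>) * m) \<le> \<xi> k \<and> \<xi> k \<le> \<xi>0" for k
  proof (induction k)
    case 0
    show ?case using step[where k=0 and \<xi>prev=\<xi>0] by simp
  next
    case (Suc k)
    then show ?case using step[where k="Suc k" and \<xi>prev="\<xi> k"] by auto
  qed
  have "decseq \<xi>"
  proof (rule decseq_SucI)
    show "\<xi> (Suc k) \<le> \<xi> k" for k
      using step[where k="Suc k" and \<xi>prev="\<xi> k"] by simp
  qed
  moreover have "0 < min \<xi>0 ((1 - \<epsilon>) * m)"
    using assms by simp
  moreover have "\<xi> (Suc k) \<le> (1 - \<epsilon>) * \<xi> k" if "\<xi> (Suc k) \<noteq> \<xi> k" for k
    using step[where k="Suc k" and \<xi>prev="\<xi> k"] that by simp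
  ultimately obtain N where "\<forall>k\<ge>N. \<xi> k = \<xi> N"
    using eventually_constant_if_jumps_geometric[of \<xi>] bounded \<open>0 < \<epsilon>\<close> by blast
  then show ?thesis using bounded[of N] by blast
qed

lemma alg3_run_xi_eventually_const:
  fixes c :: "real^'n \<Rightarrow> real^'m" and J :: "real^'n \<Rightarrow> real^'n^'m"
  assumes run: "alg3_run c J L \<Gamma> tau_init xi_init \<epsilon> \<sigma> \<beta> \<theta> x gb H d y tau xi alpha"
    and "0 < \<kappa>" and sv: "\<And>k w. \<kappa> * norm w \<le> norm (transpose (J (x k)) *v w)"
    and c_le: "\<And>k. norm (c (x k)) \<le> B" and "0 < B"
    and H_le: "\<And>k. onorm (\<lambda>v. H k *v v) \<le> K" and "0 \<le> K"
    and H_null: "\<And>k u. J (x k) *v u = 0 \<Longrightarrow> \<zeta> * (norm u)\<^sup>2 \<le> u \<bullet> (H k *v u)" and "0 < \<zeta>"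
    and "0 < tau_init" and "0 < \<epsilon>" "\<epsilon> < 1" and "0 < \<sigma>" "\<sigma> < 1" and "0 < xi_init"
  shows "\<exists>kbar \<xi>bar. min xi_init ((1 - \<epsilon>) * ratio_bound \<zeta> K (\<sigma> * \<kappa>\<^sup>2 / (tau_init * B))) \<le> \<xi>bar \<and>
           \<xi>bar \<le> xi_init \<and> (\<forall>k\<ge>kbar. xi k = \<xi>bar)"
proof -
  note iteration = alg3_runD[OF run]
  have tau: "0 < tau k \<and> tau k \<le> tau_init \<and> (0 < gb k \<bullet> d k + max (d k \<bullet> (H k *v d k)) 0 \<longrightarrow>
      tau k * (gb k \<bullet> d k + max (d k \<bullet> (H k *v d k)) 0) \<le> (1 - \<sigma>) * l1norm (c (x k)))" for k
    using l1norm_pos_if_denominator_pos[OF iteration(1,2) H_null \<open>0 < \<zeta>\<close>] assms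
    by (intro merit_update_sequence[OF \<open>0 < tau_init\<close> l1norm_nonneg _ _ _ _ iteration(4)]) simp_all
  have "ratio_bound \<zeta> K (\<sigma> * \<kappa>\<^sup>2 / (tau_init * B))
          \<le> dq c (x k) (tau k) (gb k) (H k) (d k) / (tau k * (norm (d k))\<^sup>2)" for k
    using tau[of k] c_le[of k] assms
    by (intro ratio_bound_le_ratio_trial[where c=c and x="x k", OF iteration(2,3)[of k] \<open>0 < \<kappa>\<close> sv
          H_le[of k] _ H_null[of k]]) simp_all
  moreover have "0 < ratio_bound \<zeta> K (\<sigma> * \<kappa>\<^sup>2 / (tau_init * B))"
    using assms by (intro ratio_bound_pos) simp_all
  ultimately show ?thesis
    using iteration(5) assms by (intro ratio_update_sequence_eventually_const) simp_all
qed

theorem lemma3p4: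
  fixes f :: "real^'n \<Rightarrow> real" and gradf :: "real^'n \<Rightarrow> real^'n"
    and c :: "real^'n \<Rightarrow> real^'m" and J :: "real^'n \<Rightarrow> real^'n^'m"
    and X :: "(real^'n) set" and L :: real and \<gamma> :: "'m \<Rightarrow> real"
    and \<kappa>H \<zeta> :: real
    and tau_init xi_init \<epsilon> \<sigma> \<theta> :: real and \<beta> :: "nat \<Rightarrow> real"
  assumes X_open: "open X" and X_convex: "convex X"
    and f_deriv: "\<And>z. z \<in> X \<Longrightarrow> (f has_derivative (\<lambda>h. gradf z \<bullet> h)) (at z)"
    and gradf_cont: "continuous_on X gradf"
    and f_bdd_below: "\<exists>B. \<forall>z\<in>X. B \<le> f z"
    and gradf_bdd: "\<exists>B. \<forall>z\<in>X. norm (gradf z) \<le> B"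
    and gradf_lip: "\<And>z w. z \<in> X \<Longrightarrow> w \<in> X \<Longrightarrow> norm (gradf z - gradf w) \<le> L * norm (z - w)"
    and c_deriv: "\<And>z. z \<in> X \<Longrightarrow> (c has_derivative (\<lambda>h. J z *v h)) (at z)"
    and c_bdd: "\<exists>B. \<forall>z\<in>X. norm (c z) \<le> B"
    and J_bdd: "\<exists>B. \<forall>z\<in>X. onorm (\<lambda>h. J z *v h) \<le> B"
    and gradc_lip: "\<And>i z w. z \<in> X \<Longrightarrow> w \<in> X \<Longrightarrow>
                      norm (row i (J z) - row i (J w)) \<le> \<gamma> i * norm (z - w)"
    and sv_bdd: "\<exists>\<kappa>>0. \<forall>z\<in>X. \<forall>v. \<kappa> * norm v \<le> norm (transpose (J z) *v v)"
    and \<zeta>_pos: "\<zeta> > 0"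
    and tau_init_pos: "tau_init > 0" and \<epsilon>_range: "0 < \<epsilon>" "\<epsilon> < 1"
    and \<sigma>_range: "0 < \<sigma>" "\<sigma> < 1" and xi_init_pos: "xi_init > 0"
    and \<beta>_range: "\<And>k. 0 < \<beta> k \<and> \<beta> k \<le> 1" and \<theta>_nonneg: "\<theta> \<ge> 0"
  shows "\<exists>\<xi>min>0. \<forall>x gb H d y tau xi alpha.
           alg3_run c J L (\<Sum>i\<in>UNIV. \<gamma> i) tau_init xi_init \<epsilon> \<sigma> \<beta> \<theta> x gb H d y tau xi alpha \<and>
           (\<forall>k. x k \<in> X) \<and>
           (\<forall>k. transpose (H k) = H k \<and> onorm (\<lambda>v. H k *v v) \<le> \<kappa>H \<and>
                (\<forall>u. J (x k) *v u = 0 \<longrightarrow> \<zeta> * (norm u)\<^sup>2 \<le> u \<bullet> (H k *v u)))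
           \<longrightarrow> (\<exists>kbar \<xi>bar. \<xi>min \<le> \<xi>bar \<and> \<xi>bar \<le> xi_init \<and> (\<forall>k\<ge>kbar. xi k = \<xi>bar))"
proof -
  obtain \<kappa> where "0 < \<kappa>" and sv: "\<forall>z\<in>X. \<forall>w. \<kappa> * norm w \<le> norm (transpose (J z) *v w)"
    using sv_bdd by blast
  obtain Bc where "\<forall>z\<in>X. norm (c z) \<le> Bc"
    using c_bdd by blast
  then have c_le: "\<forall>z\<in>X. norm (c z) \<le> \<bar>Bc\<bar> + 1"
    using abs_ge_self[of Bc] by force
  define \<xi>min where "\<xi>min =
    min xi_init ((1 - \<epsilon>) * ratio_bound \<zeta> (max \<kappa>H 0) (\<sigma> * \<kappa>\<^sup>2 / (tau_init * (\<bar>Bc\<bar> + 1))))"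
  have "0 < \<xi>min"
    unfolding \<xi>min_def using xi_init_pos \<epsilon>_range \<zeta>_pos \<sigma>_range \<open>0 < \<kappa>\<close> tau_init_pos
    by (simp add: ratio_bound_pos add_nonneg_pos)
  moreover have "\<exists>kbar \<xi>bar. \<xi>min \<le> \<xi>bar \<and> \<xi>bar \<le> xi_init \<and> (\<forall>k\<ge>kbar. xi k = \<xi>bar)"
    if "alg3_run c J L (\<Sum>i\<in>UNIV. \<gamma> i) tau_init xi_init \<epsilon> \<sigma> \<beta> \<theta> x gb H d y tau xi alpha"
      and "\<forall>k. x k \<in> X"
      and "\<forall>k. transpose (H k) = H k \<and> onorm (\<lambda>v. H k *v v) \<le> \<kappa>H \<and>
             (\<forall>u. J (x k) *v u = 0 \<longrightarrow> \<zeta> * (norm u)\<^sup>2 \<le> u \<bullet> (H k *v u))"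
    for x gb H d y tau xi alpha
    unfolding \<xi>min_def
    using that sv c_le \<zeta>_pos \<epsilon>_range \<sigma>_range tau_init_pos xi_init_pos
    by (intro alg3_run_xi_eventually_const[OF that(1) \<open>0 < \<kappa>\<close>])
      (auto intro: order_trans[OF _ max.cobounded1])
  ultimately show ?thesis
    by blast
qed

end
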